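(* Let $v\in S$ be a point with at least one irrational coordinate whose itinerary $\mathbb{X}_{a_1},\mathbb{X}_{a_2},\dots$ satisfies: $\mathbb{X}_{a_k}$ is of type $\mathbb{A}$ for all $k\ge m$, for some $m\ge1$. Then $G^{m-1}(v)$ lies on the edge $\{(x,0,0):0\le x\le1\}$ of $S$.
   Context: Let $S = \{(x,y,z)\in\mathbb{R}^3 : 0\le z\le y\le x\le 1\}$. For integers $n\ge1$ define $\mathbb{A}_n = \{\frac1{n+1} < x \le \frac1n,\ 0\le z\le y\le 1-nx\}$, $\mathbb{B}_n = \{0\le z\le 1-nx < y \le x\}$, $\mathbb{C}_n = \{1-nx < z \le y \le x \le \frac1n\}$; together with $\{(0,0,0)\}$ they partition $S$. The 3-dimensional Gauss map $G:S\to S$ is $G(0,0,0)=(0,0,0)$, $G(x,y,z)=\left(\frac1x-n,\frac yx,\frac zx\right)$ on $\mathbb{A}_n$, $G(x,y,z)=\left(\frac{1-y}{x}-n+1,\frac{x-y+z}{x},\frac{x-y}{x}\right)$ on $\mathbb{B}_n$, $G(x,y,z)=\left(\frac{1-z}{x}-n+1,\frac{x-z}{x},\frac{y-z}{x}\right)$ on $\mathbb{C}_n$. For a point $v$ whose forward orbit never hits the origin, its itinerary is the sequence $\mathbb{X}_{a_1},\mathbb{X}_{a_2},\dots$ ($\mathbb{X}\in\{\mathbb{A},\mathbb{B},\mathbb{C}\}$) with $G^{k-1}(v)\in\mathbb{X}_{a_k}$. *)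

theory Defs
  imports Complex_Main
begin

type_synonym pt = "real \<times> real \<times> real"

definition S3 :: "pt set" where
  "S3 = {(x,y,z). 0 \<le> z \<and> z \<le> y \<and> y \<le> x \<and> x \<le> 1}"

definition regA :: "nat \<Rightarrow> pt set" where
  "regA n = {(x,y,z). 1 / real (n+1) < x \<and> x \<le> 1 / real n \<and>
                      0 \<le> z \<and> z \<le> y \<and> y \<le> 1 - real n * x}"

definition regB :: "nat \<Rightarrow> pt set" where
  "regB n = {(x,y,z). 0 \<le> z \<and> z \<le> 1 - real n * x \<and> 1 - real n * x < y \<and> y \<le> x}"

definition regC :: "nat \<Rightarrow> pt set" where
  "regC n = {(x,y,z). 1 - real n * x < z \<and> z \<le> y \<and> y \<le> x \<and> x \<le> 1 / real n}"

text \<open>The 3-dimensional Gauss map. Points outside S (never reached from S) are left fixed.\<close>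
definition G3 :: "pt \<Rightarrow> pt" where
  "G3 p = (case p of (x,y,z) \<Rightarrow>
     if p = (0,0,0) then (0,0,0)
     else if \<exists>n\<ge>1. p \<in> regA n then
       (let n = real (THE n. n \<ge> 1 \<and> p \<in> regA n) in (1/x - n, y/x, z/x))
     else if \<exists>n\<ge>1. p \<in> regB n then
       (let n = real (THE n. n \<ge> 1 \<and> p \<in> regB n) in ((1-y)/x - n + 1, (x-y+z)/x, (x-y)/x))
     else if \<exists>n\<ge>1. p \<in> regC n then
       (let n = real (THE n. n \<ge> 1 \<and> p \<in> regC n) in ((1-z)/x - n + 1, (x-z)/x, (y-z)/x))
     else p)"

definition itin_is_A :: "pt \<Rightarrow> nat \<Rightarrow> bool" where
  "itin_is_A v k \<longleftrightarrow> (\<exists>n\<ge>1. (G3 ^^ (k - 1)) v \<in> regA n)"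

end

theory Submission
  imports Defs
begin

text \<open>On \<open>\<A>\<^sub>n\<close> the map divides \<open>y\<close> by \<open>x\<close>, and two consecutive \<open>\<A>\<close>-steps
  with first coordinates \<open>x, x' = 1/x - n\<close> satisfy \<open>x x' = 1 - n x \<le> min x (1 - x) \<le> 1/2\<close>.
  Hence along an orbit that stays in the \<open>\<A>\<close>-regions forever the \<open>y\<close>-coordinate at least
  doubles every two steps while remaining bounded by 1, so it must be 0 from the start;
  then also \<open>z = 0\<close> since \<open>0 \<le> z \<le> y\<close>.\<close>

lemma regA_unique:
  assumes "p \<in> regA n" "p \<in> regA n'" "n \<ge> 1" "n' \<ge> 1"
  shows "n = n'"
proof -
  obtain x y z where p: "p = (x,y,z)" by (cases p) auto
  have x: "1 / real (n+1) < x" "x \<le> 1 / real n" "1 / real (n'+1) < x" "x \<le> 1 / real n'"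
    using assms(1,2) by (auto simp: regA_def p)
  have "1 / real (n+1) < 1 / real n'" using x by linarith
  hence "real n' < real (n+1)" using assms by (simp add: frac_less_eq field_simps)
  moreover have "1 / real (n'+1) < 1 / real n" using x by linarith
  hence "real n < real (n'+1)" using assms by (simp add: frac_less_eq field_simps)
  ultimately show ?thesis by linarith
qed

lemma regA_fst_pos:
  assumes "(x,y,z) \<in> regA n"
  shows "0 < x"
proof -
  have "0 < 1 / real (n+1)" by simp
  also have "\<dots> < x" using assms by (simp add: regA_def)
  finally show ?thesis .
qed

lemma regA_subset_S3:
  assumes "n \<ge> 1"
  shows "regA n \<subseteq> S3"
proof
  fix p assume p: "p \<in> regA n"
  obtain x y z where xyz: "p = (x,y,z)" by (cases p) auto
  have r: "1 / real (n+1) < x" "x \<le> 1 / real n" "0 \<le> z" "z \<le> y" "y \<le> 1 - real n * x"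
    using p by (auto simp: regA_def xyz)
  have "1 / real n \<le> 1" using assms by simp
  moreover have "1 - real n * x < x" using r(1) by (simp add: field_simps)
  ultimately show "p \<in> S3" using r by (auto simp: S3_def xyz)
qed

lemma G3_regA:
  assumes "(x,y,z) \<in> regA n" "n \<ge> 1"
  shows "G3 (x,y,z) = (1/x - real n, y/x, z/x)"
proof -
  have "(THE n. n \<ge> 1 \<and> (x,y,z) \<in> regA n) = n"
    using assms regA_unique by blast
  moreover have "(x,y,z) \<noteq> (0,0,0)" using regA_fst_pos[OF assms(1)] by auto
  ultimately show ?thesis using assms unfolding G3_def by (auto simp: Let_def)
qed

lemma regA_twice_snd_doubles:
  assumes p: "p \<in> regA n" "n \<ge> 1" and Gp: "G3 p \<in> regA n'" "n' \<ge> 1"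
  shows "2 * fst (snd p) \<le> fst (snd (G3 (G3 p)))"
proof -
  obtain x y z where xyz: "p = (x,y,z)" by (cases p) auto
  define x' where "x' = 1/x - real n"
  have x: "0 < x" using p regA_fst_pos by (simp add: xyz)
  have y: "0 \<le> y" using regA_subset_S3[OF p(2)] p(1) by (auto simp: S3_def xyz)
  have G: "G3 p = (x', y/x, z/x)" using G3_regA p by (simp add: xyz x'_def)
  have x': "0 < x'" "x' \<le> 1"
    using Gp regA_fst_pos regA_subset_S3[OF Gp(2)] by (auto simp: G S3_def)
  have prod: "x * x' = 1 - real n * x" using x by (simp add: x'_def field_simps)
  have "x * x' \<le> x" using x x' by (simp add: mult_left_le)
  moreover have "x \<le> real n * x" using p(2) x by simp
  ultimately have half: "x * x' \<le> 1/2" using prod by linarith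
  have "G3 (G3 p) = (1/x' - real n', y/x/x', z/x/x')"
    using G3_regA Gp by (simp add: G)
  moreover have "2 * y \<le> y / (x * x')"
    using divide_left_mono[OF half y] x x' by simp
  ultimately show ?thesis by (simp add: xyz)
qed

lemma regA_orbit_snd_zero:
  assumes orbit: "\<And>k. \<exists>n\<ge>1. (G3 ^^ k) p \<in> regA n"
  shows "fst (snd p) = 0"
proof -
  define y where "y k = fst (snd ((G3 ^^ k) p))" for k
  have inS3: "(G3 ^^ k) p \<in> S3" for k using orbit[of k] regA_subset_S3 by blast
  have y_bounds: "0 \<le> y k" "y k \<le> 1" for k
    using inS3[of k] by (auto simp: y_def S3_def split: prod.splits)
  have "2 ^ j * y 0 \<le> y (2 * j)" for j
  proof (induction j)
    case (Suc j)
    have "2 * y (2 * j) \<le> y (2 * Suc j)"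
      using orbit[of "2 * j"] orbit[of "Suc (2 * j)"] regA_twice_snd_doubles
      by (fastforce simp: y_def)
    with Suc show ?case by simp
  qed simp
  hence bounded: "2 ^ j * y 0 \<le> 1" for j using y_bounds(2) order_trans by blast
  show ?thesis
  proof (rule ccontr)
    assume "fst (snd p) \<noteq> 0"
    hence pos: "0 < y 0" using y_bounds(1)[of 0] by (simp add: y_def)
    obtain j where "1 / y 0 < 2 ^ j" using real_arch_pow[of 2 "1 / y 0"] by auto
    hence "1 < 2 ^ j * y 0" using pos by (simp add: field_simps)
    with bounded[of j] show False by linarith
  qed
qed

theorem mainTheorem15:
  fixes v :: pt and m :: nat
  assumes "v \<in> S3"
    and "fst v \<notin> \<rat> \<or> fst (snd v) \<notin> \<rat> \<or> snd (snd v) \<notin> \<rat>"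
    and "\<forall>k. (G3 ^^ k) v \<noteq> (0,0,0)"
    and "m \<ge> 1"
    and "\<forall>k\<ge>m. itin_is_A v k"
  shows "\<exists>x. (G3 ^^ (m - 1)) v = (x, 0, 0) \<and> 0 \<le> x \<and> x \<le> 1"
proof -
  define p where "p = (G3 ^^ (m - 1)) v"
  have orbit_in_regA: "\<exists>n\<ge>1. (G3 ^^ k) p \<in> regA n" for k
  proof -
    have "itin_is_A v (k + m)" using assms(5) by simp
    moreover have "k + m - 1 = k + (m - 1)" using assms(4) by simp
    ultimately show ?thesis by (simp add: itin_is_A_def p_def funpow_add)
  qed
  hence "fst (snd p) = 0" by (rule regA_orbit_snd_zero)
  moreover have "p \<in> S3" using orbit_in_regA[of 0] regA_subset_S3 by auto
  ultimately show ?thesis unfolding p_def[symmetric] by (auto simp: S3_def)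
qed

end
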